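(* Let $(\mu,\nu)\in\mathcal{P}(\mathbb{T})\times\mathcal{P}(\mathbb{T})$ be $\rhd_c$-infinitely divisible. - (1) If $\int_{\mathbb{T}}\zeta\,d\mu(\zeta)=0$, then $\mu=\omega$. - (2) If $\int_{\mathbb{T}}\zeta\,d\nu(\zeta)=0$, then $\nu=\omega$.
   Context: $\mathbb{T}$ is the unit circle, $\mathbb{D}$ the open unit disc, $\mathcal{P}(\mathbb{T})$ the Borel probability measures on $\mathbb{T}$, and $\omega$ the normalized Haar measure on $\mathbb{T}$. For $\mu\in\mathcal{P}(\mathbb{T})$ let $\psi_\mu(z)=\int\frac{z\zeta}{1-z\zeta}d\mu(\zeta)$ and $\eta_\mu=\psi_\mu/(1+\psi_\mu)$ on $\mathbb{D}$; $\eta_\mu$ determines $\mu$. The multiplicative conditionally monotone convolution is $(\mu_1,\nu_1)\rhd_c(\mu_2,\nu_2)=(\mu,\nu)$ with $\eta_\nu=\eta_{\nu_1}\circ\eta_{\nu_2}$ and $\eta_\mu(z)=\eta_{\mu_2}(z)\,h_{\mu_1}(\eta_{\nu_2}(z))$, where $h_{\mu_1}(w)=\eta_{\mu_1}(w)/w$ and $h_{\mu_1}(0)=\eta_{\mu_1}'(0)$. $(\mu,\nu)$ is $\rhd_c$-infinitely divisible if for every integer $n\ge2$ there is $(\mu_n,\nu_n)\in\mathcal{P}(\mathbb{T})^2$ with $(\mu,\nu)=(\mu_n,\nu_n)^{\rhd_c n}$, the $n$-fold convolution power. *)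

theory Defs
  imports "HOL-Probability.Probability"
begin

text \<open>Borel probability measures on the unit circle T, realised as probability
  measures on the Borel sets of the complex plane that are concentrated on T.\<close>
definition circle_prob :: "complex measure \<Rightarrow> bool" where
  "circle_prob M \<longleftrightarrow> prob_space M \<and> sets M = sets (borel :: complex measure)
      \<and> emeasure M (sphere 0 1) = 1"

definition haar_circle :: "complex measure" where
  "haar_circle = distr (uniform_measure lborel {0..(1::real)}) borel (\<lambda>t. cis (2 * pi * t))"

definition psi_fun :: "complex measure \<Rightarrow> complex \<Rightarrow> complex" where
  "psi_fun M z = integral\<^sup>L M (\<lambda>\<zeta>. z * \<zeta> / (1 - z * \<zeta>))"

definition eta_fun :: "complex measure \<Rightarrow> complex \<Rightarrow> complex" where
  "eta_fun M z = psi_fun M z / (1 + psi_fun M z)"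

definition h_fun :: "complex measure \<Rightarrow> complex \<Rightarrow> complex" where
  "h_fun M w = (if w = 0 then deriv (eta_fun M) 0 else eta_fun M w / w)"

text \<open>(mu1,nu1) |>c (mu2,nu2) = (mu,nu), as a relation (functional since eta determines the measure).\<close>
definition cm_conv :: "complex measure \<times> complex measure \<Rightarrow> complex measure \<times> complex measure
    \<Rightarrow> complex measure \<times> complex measure \<Rightarrow> bool" where
  "cm_conv P1 P2 P \<longleftrightarrow>
     circle_prob (fst P1) \<and> circle_prob (snd P1) \<and> circle_prob (fst P2) \<and> circle_prob (snd P2)
     \<and> circle_prob (fst P) \<and> circle_prob (snd P)
     \<and> (\<forall>z\<in>ball 0 1. eta_fun (snd P) z = eta_fun (snd P1) (eta_fun (snd P2) z)
                    \<and> eta_fun (fst P) z = eta_fun (fst P2) z * h_fun (fst P1) (eta_fun (snd P2) z))"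

inductive cm_pow :: "complex measure \<times> complex measure \<Rightarrow> nat \<Rightarrow> complex measure \<times> complex measure \<Rightarrow> bool"
  for P where
  one: "circle_prob (fst P) \<Longrightarrow> circle_prob (snd P) \<Longrightarrow> cm_pow P 1 P"
| step: "cm_pow P k Q \<Longrightarrow> cm_conv Q P R \<Longrightarrow> cm_pow P (Suc k) R"

definition cm_inf_div :: "complex measure \<Rightarrow> complex measure \<Rightarrow> bool" where
  "cm_inf_div \<mu> \<nu> \<longleftrightarrow> circle_prob \<mu> \<and> circle_prob \<nu> \<and>
     (\<forall>n::nat. n \<ge> 2 \<longrightarrow> (\<exists>Pn. circle_prob (fst Pn) \<and> circle_prob (snd Pn) \<and> cm_pow Pn n (\<mu>, \<nu>)))"

end

theory Submission
  imports Defs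
begin

text \<open>
  Write \<open>m\<^sub>1(\<sigma>) = \<integral>\<zeta> d\<sigma>\<close>. Near \<open>0\<close>, \<open>\<eta>\<^sub>\<sigma>(z) = m\<^sub>1(\<sigma>) z + O(z\<^sup>2)\<close> and \<open>h\<^sub>\<sigma>(0) = m\<^sub>1(\<sigma>)\<close>;
  comparing linear terms in the relations defining the convolution shows that first moments
  are multiplicative, so if \<open>(\<mu>,\<nu>)\<close> is the \<open>n\<close>-th power of \<open>(\<mu>\<^sub>n,\<nu>\<^sub>n)\<close>, then
  \<open>m\<^sub>1(\<mu>) = m\<^sub>1(\<mu>\<^sub>n)\<^sup>n\<close> and \<open>m\<^sub>1(\<nu>) = m\<^sub>1(\<nu>\<^sub>n)\<^sup>n\<close>. If \<open>m\<^sub>1(\<nu>) = 0\<close>, then \<open>\<eta>\<^sub>\<nu>\<close> is an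
  \<open>n\<close>-fold composition of functions vanishing to second order at \<open>0\<close>; if \<open>m\<^sub>1(\<mu>) = 0\<close>, then
  inductively \<open>\<eta>\<^sub>\<mu>\<close> is \<open>\<eta>\<^sub>\<mu>\<^sub>n\<close> times a function vanishing to order \<open>n - 1\<close>.
  Either way \<open>\<eta>\<close>, and with it \<open>\<psi> = \<eta>/(1 - \<eta>)\<close>, vanishes at \<open>0\<close> to order \<open>n + 1\<close>.
  As \<open>n\<close> is arbitrary, all Taylor coefficients of \<open>\<psi>\<close>, i.e. all moments \<open>\<integral>\<zeta>\<^sup>k\<close>
  with \<open>k \<ge> 1\<close>, vanish. Since polynomials in \<open>z\<close> and \<open>cnj z\<close> are dense in the continuous
  functions on the circle, a measure there is determined by its moments, so it is Haar measure.
\<close>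

section \<open>Probability measures on the circle\<close>

definition moment :: "complex measure \<Rightarrow> nat \<Rightarrow> complex" where
  "moment M k = integral\<^sup>L M (\<lambda>\<zeta>. \<zeta> ^ k)"

lemma circle_prob_prob_space: "circle_prob M \<Longrightarrow> prob_space M"
  by (simp add: circle_prob_def)

lemma circle_prob_sets: "circle_prob M \<Longrightarrow> sets M = sets borel"
  by (simp add: circle_prob_def)

lemma circle_prob_space: "circle_prob M \<Longrightarrow> space M = UNIV"
  by (metis circle_prob_sets sets_eq_imp_space_eq space_borel)

lemma circle_prob_AE_norm_eq_1:
  assumes "circle_prob M"
  shows "AE \<zeta> in M. cmod \<zeta> = 1"
proof -
  interpret prob_space M
    using assms by (rule circle_prob_prob_space)
  have "prob (sphere 0 1) = 1"
    using assms by (simp add: circle_prob_def measure_def)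
  then have "AE \<zeta> in M. \<zeta> \<in> sphere 0 1"
    by (rule AE_prob_1)
  then show ?thesis
    by eventually_elim simp
qed

lemma circle_prob_measurable:
  "circle_prob M \<Longrightarrow> f \<in> borel_measurable borel \<Longrightarrow> f \<in> borel_measurable M"
  by (simp add: circle_prob_sets cong: measurable_cong_sets)

lemma circle_prob_integrable_bounded:
  fixes f :: "complex \<Rightarrow> 'b::{banach,second_countable_topology}"
  assumes M: "circle_prob M" and f: "f \<in> borel_measurable borel"
    and bound: "AE \<zeta> in M. norm (f \<zeta>) \<le> B"
  shows "integrable M f"
proof (rule Bochner_Integration.integrable_bound)
  interpret prob_space M
    using M by (rule circle_prob_prob_space)
  show "integrable M (\<lambda>_. B)"
    by simp
  show "AE \<zeta> in M. norm (f \<zeta>) \<le> norm B"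
    using bound by eventually_elim auto
qed (rule circle_prob_measurable[OF M f])

lemma circle_prob_norm_integral_le:
  fixes f :: "complex \<Rightarrow> 'b::{banach,second_countable_topology}"
  assumes M: "circle_prob M" and f: "integrable M f"
    and bound: "AE \<zeta> in M. norm (f \<zeta>) \<le> B"
  shows "norm (integral\<^sup>L M f) \<le> B"
proof -
  interpret prob_space M
    using M by (rule circle_prob_prob_space)
  have "norm (integral\<^sup>L M f) \<le> integral\<^sup>L M (\<lambda>\<zeta>. norm (f \<zeta>))"
    by (rule integral_norm_bound)
  also have "\<dots> \<le> integral\<^sup>L M (\<lambda>_. B)"
    using f bound by (intro integral_mono_AE) auto
  also have "\<dots> = B"
    by (simp add: prob_space)
  finally show ?thesis .
qed

lemma circle_prob_integrable_continuous:
  fixes f :: "complex \<Rightarrow> 'b::{banach,second_countable_topology}"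
  assumes M: "circle_prob M" and f: "continuous_on UNIV f"
  shows "integrable M f"
proof -
  have "compact (f ` sphere 0 1)"
    by (rule compact_continuous_image) (use f continuous_on_subset in auto)
  then obtain B where "\<forall>y\<in>f ` sphere 0 1. norm y \<le> B"
    using compact_imp_bounded bounded_iff by metis
  then have "AE \<zeta> in M. norm (f \<zeta>) \<le> B"
    using circle_prob_AE_norm_eq_1[OF M] by (auto elim: AE_mp)
  then show ?thesis
    by (rule circle_prob_integrable_bounded[OF M borel_measurable_continuous_onI[OF f]])
qed

lemma circle_prob_integrable_power: "circle_prob M \<Longrightarrow> integrable M (\<lambda>\<zeta>::complex. \<zeta> ^ k)"
  by (erule circle_prob_integrable_continuous) (intro continuous_intros)

lemma norm_moment_le_1: "circle_prob M \<Longrightarrow> cmod (moment M k) \<le> 1"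
  unfolding moment_def
  by (rule circle_prob_norm_integral_le[OF _ circle_prob_integrable_power])
     (auto dest: circle_prob_AE_norm_eq_1 simp: norm_power)

section \<open>Expansions of \<open>\<psi>\<close>, \<open>\<eta>\<close> and \<open>h\<close> at the origin\<close>

lemma geometric_series_remainder:
  fixes w :: complex
  assumes "w \<noteq> 1"
  shows "w / (1 - w) - (\<Sum>j=1..k. w ^ j) = w ^ (k + 1) / (1 - w)"
proof (induction k)
  case (Suc k)
  have "w / (1 - w) - (\<Sum>j=1..Suc k. w ^ j) = w ^ (k + 1) / (1 - w) - w ^ (k + 1)"
    using Suc by (simp add: algebra_simps)
  also have "\<dots> = w ^ (Suc k + 1) / (1 - w)"
    using assms by (simp add: field_simps)
  finally show ?case .
qed simp

lemma psi_fun_moment_expansion: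
  assumes M: "circle_prob M" and z: "cmod z \<le> 1/2"
  shows "cmod (psi_fun M z - (\<Sum>j=1..k. moment M j * z ^ j)) \<le> 2 * cmod z ^ (k + 1)"
proof -
  have far_from_pole: "AE \<zeta> in M. cmod (1 - z * \<zeta>) \<ge> 1/2 \<and> cmod \<zeta> = 1"
    using circle_prob_AE_norm_eq_1[OF M]
  proof eventually_elim
    case (elim \<zeta>)
    have "1 - cmod (z * \<zeta>) \<le> cmod (1 - z * \<zeta>)"
      by (metis norm_one norm_triangle_ineq2)
    with elim z show ?case
      by (simp add: norm_mult)
  qed
  have bound: "AE \<zeta> in M. cmod ((z * \<zeta>) ^ n / (1 - z * \<zeta>)) \<le> 2 * cmod z ^ n" for n
    using far_from_pole
  proof eventually_elim
    case (elim \<zeta>)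
    then have "cmod ((z * \<zeta>) ^ n / (1 - z * \<zeta>)) = cmod z ^ n / cmod (1 - z * \<zeta>)"
      by (simp add: norm_divide norm_mult norm_power)
    also have "\<dots> \<le> cmod z ^ n / (1/2)"
      using elim by (intro divide_left_mono) auto
    finally show ?case
      by simp
  qed
  have integrable: "integrable M (\<lambda>\<zeta>. (z * \<zeta>) ^ n / (1 - z * \<zeta>))" for n
    by (rule circle_prob_integrable_bounded[OF M _ bound]) measurable
  have "psi_fun M z - (\<Sum>j=1..k. moment M j * z ^ j)
      = integral\<^sup>L M (\<lambda>\<zeta>. z * \<zeta> / (1 - z * \<zeta>) - (\<Sum>j=1..k. (z * \<zeta>) ^ j))"
    using integrable[of 1] circle_prob_integrable_power[OF M]
    by (simp add: psi_fun_def moment_def integral_sum power_mult_distrib mult.commute)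
  also have "\<dots> = integral\<^sup>L M (\<lambda>\<zeta>. (z * \<zeta>) ^ (k + 1) / (1 - z * \<zeta>))"
  proof (rule integral_cong_AE)
    show "AE \<zeta> in M. z * \<zeta> / (1 - z * \<zeta>) - (\<Sum>j=1..k. (z * \<zeta>) ^ j)
        = (z * \<zeta>) ^ (k + 1) / (1 - z * \<zeta>)"
      using far_from_pole by eventually_elim (rule geometric_series_remainder, force)
  qed (intro circle_prob_measurable[OF M]; measurable)+
  also have "cmod \<dots> \<le> 2 * cmod z ^ (k + 1)"
    by (rule circle_prob_norm_integral_le[OF M integrable bound])
  finally show ?thesis .
qed

lemma
  assumes M: "circle_prob M" and z: "cmod z \<le> 1/4"
  shows norm_psi_fun_le: "cmod (psi_fun M z) \<le> 2 * cmod z"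
    and norm_one_plus_psi_fun_ge: "cmod (1 + psi_fun M z) \<ge> 1/2"
    and norm_psi_fun_le_eta_fun: "cmod (psi_fun M z) \<le> 2 * cmod (eta_fun M z)"
proof -
  show psi: "cmod (psi_fun M z) \<le> 2 * cmod z"
    using psi_fun_moment_expansion[OF M, of z 0] z by simp
  have "1 - cmod (psi_fun M z) \<le> cmod (1 + psi_fun M z)"
    by (metis norm_diff_ineq norm_one)
  then show "cmod (1 + psi_fun M z) \<ge> 1/2"
    using psi z by simp
  then have "psi_fun M z = eta_fun M z * (1 + psi_fun M z)"
    by (auto simp: eta_fun_def)
  moreover have "cmod (1 + psi_fun M z) \<le> 2"
    using psi z norm_triangle_ineq[of 1 "psi_fun M z"] by simp
  ultimately show "cmod (psi_fun M z) \<le> 2 * cmod (eta_fun M z)"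
    by (metis mult.commute mult_right_mono norm_ge_zero norm_mult)
qed

lemma norm_eta_fun_le:
  assumes M: "circle_prob M" and z: "cmod z \<le> 1/4"
  shows "cmod (eta_fun M z) \<le> 4 * cmod z"
proof -
  have "cmod (eta_fun M z) = cmod (psi_fun M z) / cmod (1 + psi_fun M z)"
    by (simp add: eta_fun_def norm_divide)
  also have "\<dots> \<le> (2 * cmod z) / (1/2)"
    using norm_psi_fun_le[OF M z] norm_one_plus_psi_fun_ge[OF M z] by (intro frac_le) auto
  finally show ?thesis
    by simp
qed

lemma eta_fun_first_order_expansion:
  assumes M: "circle_prob M" and z: "cmod z \<le> 1/4"
  shows "cmod (eta_fun M z - moment M 1 * z) \<le> 8 * cmod z ^ 2"
proof -
  let ?m = "moment M 1" and ?\<psi> = "psi_fun M z"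
  have denominator: "cmod (1 + ?\<psi>) \<ge> 1/2"
    by (rule norm_one_plus_psi_fun_ge[OF M z])
  have "cmod (?m * z * ?\<psi>) \<le> 1 * (cmod z * (2 * cmod z))"
    unfolding norm_mult mult.assoc using norm_moment_le_1[OF M] norm_psi_fun_le[OF M z]
    by (intro mult_mono mult_left_mono) auto
  moreover have "cmod (?\<psi> - ?m * z) \<le> 2 * cmod z ^ 2"
    using psi_fun_moment_expansion[OF M, of z 1] z by (simp add: power2_eq_square)
  ultimately have numerator: "cmod ((?\<psi> - ?m * z) - ?m * z * ?\<psi>) \<le> 4 * cmod z ^ 2"
    using norm_triangle_ineq4[of "?\<psi> - ?m * z" "?m * z * ?\<psi>"] by (simp add: power2_eq_square)
  have "eta_fun M z - ?m * z = ((?\<psi> - ?m * z) - ?m * z * ?\<psi>) / (1 + ?\<psi>)"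
  proof -
    have "1 + ?\<psi> \<noteq> 0"
      using denominator by auto
    then show ?thesis
      by (simp add: eta_fun_def field_simps)
  qed
  also have "cmod \<dots> \<le> (4 * cmod z ^ 2) / (1/2)"
    unfolding norm_divide using numerator denominator by (intro frac_le) auto
  finally show ?thesis
    by simp
qed

lemma eta_fun_0 [simp]: "eta_fun M 0 = 0"
  by (simp add: eta_fun_def psi_fun_def)

lemma norm_eta_fun_quotient_minus_moment_le:
  assumes M: "circle_prob M" and w: "w \<noteq> 0" "cmod w \<le> 1/4"
  shows "cmod (eta_fun M w / w - moment M 1) \<le> 8 * cmod w"
proof -
  have "eta_fun M w / w - moment M 1 = (eta_fun M w - moment M 1 * w) / w"
    using w by (simp add: field_simps)
  then have "cmod (eta_fun M w / w - moment M 1) = cmod (eta_fun M w - moment M 1 * w) / cmod w"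
    by (simp add: norm_divide)
  also have "\<dots> \<le> 8 * cmod w ^ 2 / cmod w"
    using eta_fun_first_order_expansion[OF M w(2)] by (intro divide_right_mono) auto
  also have "\<dots> = 8 * cmod w"
    using w by (simp add: power2_eq_square)
  finally show ?thesis .
qed

lemma eta_fun_has_derivative_0:
  assumes M: "circle_prob M"
  shows "(eta_fun M has_field_derivative moment M 1) (at 0)"
proof -
  have "\<forall>\<^sub>F w in at (0::complex). w \<noteq> 0 \<and> cmod w \<le> 1/4"
    unfolding eventually_at by (rule exI[of _ "1/4"]) (auto simp: dist_norm)
  then have "\<forall>\<^sub>F w in at 0. norm (eta_fun M w / w - moment M 1) \<le> 8 * cmod w"
    by eventually_elim (use norm_eta_fun_quotient_minus_moment_le[OF M] in blast)
  moreover have "((\<lambda>w. 8 * cmod w) \<longlongrightarrow> 0) (at (0::complex))"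
    by (auto intro!: tendsto_eq_intros)
  ultimately have "((\<lambda>w. eta_fun M w / w - moment M 1) \<longlongrightarrow> 0) (at 0)"
    by (rule Lim_null_comparison)
  then show ?thesis
    by (simp add: has_field_derivative_iff Lim_null[symmetric])
qed

lemma h_fun_0: "circle_prob M \<Longrightarrow> h_fun M 0 = moment M 1"
  by (simp add: h_fun_def DERIV_imp_deriv[OF eta_fun_has_derivative_0])

lemma norm_h_fun_minus_moment_le:
  assumes M: "circle_prob M" and w: "cmod w \<le> 1/4"
  shows "cmod (h_fun M w - moment M 1) \<le> 8 * cmod w"
  using norm_eta_fun_quotient_minus_moment_le[OF M _ w] h_fun_0[OF M] by (simp add: h_fun_def)

lemma norm_h_fun_le:
  assumes M: "circle_prob M" and w: "cmod w \<le> 1/4"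
  shows "cmod (h_fun M w) \<le> 4"
  using norm_h_fun_minus_moment_le[OF M w] norm_moment_le_1[OF M, of 1] w
    norm_triangle_ineq2[of "h_fun M w" "moment M 1"] by linarith

section \<open>Order of vanishing at the origin\<close>

definition vanishes_to_order :: "(complex \<Rightarrow> complex) \<Rightarrow> nat \<Rightarrow> bool" where
  "vanishes_to_order f N \<longleftrightarrow>
     (\<exists>D r. 0 \<le> D \<and> 0 < r \<and> (\<forall>z. cmod z < r \<longrightarrow> cmod (f z) \<le> D * cmod z ^ N))"

lemma vanishes_to_order_mono:
  assumes "vanishes_to_order f N" "K \<le> N"
  shows "vanishes_to_order f K"
proof -
  obtain D r where D: "0 \<le> D" "0 < r" "\<And>z. cmod z < r \<Longrightarrow> cmod (f z) \<le> D * cmod z ^ N"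
    using assms(1) unfolding vanishes_to_order_def by blast
  have "cmod (f z) \<le> D * cmod z ^ K" if "cmod z < min r 1" for z
  proof -
    have "cmod (f z) \<le> D * cmod z ^ N"
      using D that by simp
    also have "\<dots> \<le> D * cmod z ^ K"
      using that assms(2) D by (intro mult_left_mono power_decreasing) auto
    finally show ?thesis .
  qed
  then show ?thesis
    unfolding vanishes_to_order_def using D by (intro exI[of _ D] exI[of _ "min r 1"]) auto
qed

lemma vanishes_to_order_cong:
  assumes "\<And>z. cmod z < 1 \<Longrightarrow> f z = g z" "vanishes_to_order g N"
  shows "vanishes_to_order f N"
proof -
  obtain D r where D: "0 \<le> D" "0 < r" "\<And>z. cmod z < r \<Longrightarrow> cmod (g z) \<le> D * cmod z ^ N"
    using assms(2) unfolding vanishes_to_order_def by blast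
  show ?thesis
    unfolding vanishes_to_order_def using D assms(1)
    by (intro exI[of _ D] exI[of _ "min r 1"]) auto
qed

lemma vanishes_to_order_mult:
  assumes "vanishes_to_order f M" "vanishes_to_order g N"
  shows "vanishes_to_order (\<lambda>z. f z * g z) (M + N)"
proof -
  obtain D r where D: "0 \<le> D" "0 < r" "\<And>z. cmod z < r \<Longrightarrow> cmod (f z) \<le> D * cmod z ^ M"
    using assms(1) unfolding vanishes_to_order_def by blast
  obtain E s where E: "0 \<le> E" "0 < s" "\<And>z. cmod z < s \<Longrightarrow> cmod (g z) \<le> E * cmod z ^ N"
    using assms(2) unfolding vanishes_to_order_def by blast
  have "cmod (f z * g z) \<le> (D * E) * cmod z ^ (M + N)" if "cmod z < min r s" for z
  proof -
    have "cmod (f z * g z) \<le> (D * cmod z ^ M) * (E * cmod z ^ N)"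
      unfolding norm_mult using D(3)[of z] E(3)[of z] that D(1) by (intro mult_mono) auto
    then show ?thesis
      by (simp add: power_add mult_ac)
  qed
  then show ?thesis
    unfolding vanishes_to_order_def using D E by (intro exI[of _ "D * E"] exI[of _ "min r s"]) auto
qed

lemma vanishes_to_order_compose:
  assumes "vanishes_to_order f N" "vanishes_to_order g M" "1 \<le> M"
  shows "vanishes_to_order (\<lambda>z. f (g z)) (M * N)"
proof -
  obtain D r where D: "0 \<le> D" "0 < r" "\<And>w. cmod w < r \<Longrightarrow> cmod (f w) \<le> D * cmod w ^ N"
    using assms(1) unfolding vanishes_to_order_def by blast
  obtain E s where E: "0 \<le> E" "0 < s" "\<And>z. cmod z < s \<Longrightarrow> cmod (g z) \<le> E * cmod z ^ M"
    using assms(2) unfolding vanishes_to_order_def by blast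
  define \<rho> where "\<rho> = min s (min 1 (r / (E + 1)))"
  have "cmod (f (g z)) \<le> (D * E ^ N) * cmod z ^ (M * N)" if z: "cmod z < \<rho>" for z
  proof -
    have g: "cmod (g z) \<le> E * cmod z ^ M"
      using E(3) z by (simp add: \<rho>_def)
    also have "\<dots> \<le> E * cmod z"
      using z assms(3) E(1) power_decreasing[of 1 M "cmod z"] by (intro mult_left_mono) (auto simp: \<rho>_def)
    also have "\<dots> \<le> (E + 1) * cmod z"
      by (simp add: distrib_right)
    also have "\<dots> < r"
      using z E(1) by (simp add: \<rho>_def field_simps)
    finally have "cmod (f (g z)) \<le> D * cmod (g z) ^ N"
      by (rule D(3))
    also have "\<dots> \<le> D * (E * cmod z ^ M) ^ N"
      using g D(1) by (intro mult_left_mono power_mono) auto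
    finally show ?thesis
      by (simp add: power_mult_distrib power_mult mult_ac)
  qed
  moreover have "0 < \<rho>"
    using D E by (simp add: \<rho>_def)
  ultimately show ?thesis
    unfolding vanishes_to_order_def using D E by (intro exI[of _ "D * E ^ N"] exI[of _ \<rho>]) auto
qed

lemma vanishes_to_order_eta_fun_1:
  assumes M: "circle_prob M"
  shows "vanishes_to_order (eta_fun M) 1"
  unfolding vanishes_to_order_def using norm_eta_fun_le[OF M]
  by (intro exI[of _ 4] exI[of _ "1/4"]) auto

lemma vanishes_to_order_eta_fun_2:
  assumes M: "circle_prob M" and "moment M 1 = 0"
  shows "vanishes_to_order (eta_fun M) 2"
  unfolding vanishes_to_order_def using eta_fun_first_order_expansion[OF M] assms(2)
  by (intro exI[of _ 8] exI[of _ "1/4"]) auto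

lemma vanishes_to_order_h_fun:
  assumes M: "circle_prob M" and "moment M 1 = 0" and "vanishes_to_order (eta_fun M) (N + 1)"
  shows "vanishes_to_order (h_fun M) N"
proof -
  obtain D r where D: "0 \<le> D" "0 < r"
    "\<And>w. cmod w < r \<Longrightarrow> cmod (eta_fun M w) \<le> D * cmod w ^ (N + 1)"
    using assms(3) unfolding vanishes_to_order_def by blast
  have "cmod (h_fun M w) \<le> D * cmod w ^ N" if "cmod w < r" for w
  proof (cases "w = 0")
    case True
    then show ?thesis
      using h_fun_0[OF M] assms(2) D(1) by simp
  next
    case False
    then have "cmod (h_fun M w) = cmod (eta_fun M w) / cmod w"
      by (simp add: h_fun_def norm_divide)
    also have "\<dots> \<le> D * cmod w ^ (N + 1) / cmod w"
      using D(3)[OF that] by (intro divide_right_mono) auto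
    finally show ?thesis
      using False by simp
  qed
  then show ?thesis
    unfolding vanishes_to_order_def using D by blast
qed

lemma vanishes_to_order_psi_fun:
  assumes M: "circle_prob M" and "vanishes_to_order (eta_fun M) N"
  shows "vanishes_to_order (psi_fun M) N"
proof -
  obtain D r where D: "0 \<le> D" "0 < r" "\<And>z. cmod z < r \<Longrightarrow> cmod (eta_fun M z) \<le> D * cmod z ^ N"
    using assms(2) unfolding vanishes_to_order_def by blast
  have "cmod (psi_fun M z) \<le> 2 * D * cmod z ^ N" if "cmod z < min r (1/4)" for z
    using norm_psi_fun_le_eta_fun[OF M, of z] D(3)[of z] that by simp
  then show ?thesis
    unfolding vanishes_to_order_def using D by (intro exI[of _ "2 * D"] exI[of _ "min r (1/4)"]) auto
qed

lemma monomial_coefficient_eq_0: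
  fixes a :: complex
  assumes "0 < r" and bound: "\<And>t. 0 < t \<Longrightarrow> t < r \<Longrightarrow> cmod a * t ^ k \<le> C * t ^ (k + 1)"
  shows "a = 0"
proof (rule ccontr)
  assume "a \<noteq> 0"
  have bound': "cmod a \<le> C * t" if "0 < t" "t < r" for t
    using bound[OF that] that by (simp add: mult.commute mult.left_commute)
  have "0 < cmod a"
    using \<open>a \<noteq> 0\<close> by simp
  also have "cmod a \<le> C * (r / 2)"
    using \<open>0 < r\<close> by (intro bound') auto
  finally have "0 < C"
    using \<open>0 < r\<close> by (simp add: zero_less_mult_iff)
  define t where "t = min (r / 2) (cmod a / (2 * C))"
  have "0 < t" "t < r"
    using \<open>0 < C\<close> \<open>0 < r\<close> \<open>a \<noteq> 0\<close> by (auto simp: t_def)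
  then have "cmod a \<le> C * t"
    by (rule bound')
  also have "\<dots> \<le> C * (cmod a / (2 * C))"
    using \<open>0 < C\<close> by (intro mult_left_mono) (auto simp: t_def)
  finally show False
    using \<open>0 < C\<close> \<open>a \<noteq> 0\<close> by simp
qed

lemma moment_eq_0_if_vanishes_to_all_orders:
  assumes M: "circle_prob M" and vanishes: "\<And>N. vanishes_to_order (psi_fun M) N"
  shows "k \<ge> 1 \<Longrightarrow> moment M k = 0"
proof (induction k rule: less_induct)
  case (less k)
  have leading_term: "(\<Sum>j=1..k. moment M j * z ^ j) = moment M k * z ^ k" for z
  proof -
    have "{1..k} = insert k {1..<k}"
      using less.prems by auto
    then have "(\<Sum>j=1..k. moment M j * z ^ j) = moment M k * z ^ k + (\<Sum>j=1..<k. moment M j * z ^ j)"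
      by simp
    also have "(\<Sum>j=1..<k. moment M j * z ^ j) = 0"
      using less.IH by (intro sum.neutral) auto
    finally show ?thesis
      by simp
  qed
  obtain D r where D: "0 \<le> D" "0 < r"
    "\<And>z. cmod z < r \<Longrightarrow> cmod (psi_fun M z) \<le> D * cmod z ^ (k + 1)"
    using vanishes[of "k + 1"] unfolding vanishes_to_order_def by blast
  show ?case
  proof (rule monomial_coefficient_eq_0[of "min r (1/2)" _ k "D + 2"])
    fix t :: real
    assume t: "0 < t" "t < min r (1/2)"
    let ?z = "complex_of_real t"
    have "cmod (moment M k * ?z ^ k)
        \<le> cmod (psi_fun M ?z) + cmod (psi_fun M ?z - moment M k * ?z ^ k)"
      by (metis norm_triangle_sub norm_minus_commute)
    also have "\<dots> \<le> D * t ^ (k + 1) + 2 * t ^ (k + 1)"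
      using D(3)[of ?z] psi_fun_moment_expansion[OF M, of ?z k] leading_term t
      by (intro add_mono) auto
    finally show "cmod (moment M k) * t ^ k \<le> (D + 2) * t ^ (k + 1)"
      using t by (simp add: norm_mult norm_power distrib_right)
  qed (use D in auto)
qed

section \<open>Convolution powers\<close>

lemma cm_convD:
  assumes "cm_conv Q P R"
  shows "circle_prob (fst Q)" "circle_prob (snd Q)" "circle_prob (fst P)" "circle_prob (snd P)"
    "circle_prob (fst R)" "circle_prob (snd R)"
    "\<And>z. cmod z < 1 \<Longrightarrow> eta_fun (snd R) z = eta_fun (snd Q) (eta_fun (snd P) z)"
    "\<And>z. cmod z < 1 \<Longrightarrow> eta_fun (fst R) z = eta_fun (fst P) z * h_fun (fst Q) (eta_fun (snd P) z)"
  using assms by (auto simp: cm_conv_def)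

lemma moment_1_cm_conv_snd:
  assumes "cm_conv Q P R"
  shows "moment (snd R) 1 = moment (snd Q) 1 * moment (snd P) 1"
proof -
  note E = cm_convD[OF assms]
  let ?mR = "moment (snd R) 1" and ?mQ = "moment (snd Q) 1" and ?mP = "moment (snd P) 1"
  have "?mR - ?mQ * ?mP = 0"
  proof (rule monomial_coefficient_eq_0[of "1/16" _ 1 144])
    fix t :: real
    assume t: "0 < t" "t < 1/16"
    define z where "z = complex_of_real t"
    define w where "w = eta_fun (snd P) z"
    have z: "cmod z = t" "cmod z \<le> 1/4" "cmod z < 1"
      using t by (auto simp: z_def)
    have w: "cmod w \<le> 4 * t" "cmod w \<le> 1/4"
      using norm_eta_fun_le[OF E(4) z(2)] z t by (auto simp: w_def)
    have "(?mR - ?mQ * ?mP) * z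
        = (?mR * z - eta_fun (snd R) z) + (eta_fun (snd Q) w - ?mQ * w) + ?mQ * (w - ?mP * z)"
      using E(7)[OF z(3)] by (simp add: w_def algebra_simps)
    also have "cmod \<dots> \<le> 8 * t ^ 2 + 8 * (4 * t) ^ 2 + 1 * (8 * t ^ 2)"
    proof (intro norm_triangle_mono)
      show "cmod (?mR * z - eta_fun (snd R) z) \<le> 8 * t ^ 2"
        using eta_fun_first_order_expansion[OF E(6) z(2)] z by (simp add: norm_minus_commute)
      show "cmod (eta_fun (snd Q) w - ?mQ * w) \<le> 8 * (4 * t) ^ 2"
        using eta_fun_first_order_expansion[OF E(2) w(2)] power_mono[OF w(1) norm_ge_zero, of 2]
        by linarith
      show "cmod (?mQ * (w - ?mP * z)) \<le> 1 * (8 * t ^ 2)"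
        unfolding norm_mult using norm_moment_le_1[OF E(2)] eta_fun_first_order_expansion[OF E(4) z(2)] z
        by (intro mult_mono) (auto simp: w_def)
    qed
    finally show "cmod (?mR - ?mQ * ?mP) * t ^ 1 \<le> 144 * t ^ (1 + 1)"
      using t by (simp add: z_def norm_mult power2_eq_square)
  qed simp
  then show ?thesis
    by simp
qed

lemma moment_1_cm_conv_fst:
  assumes "cm_conv Q P R"
  shows "moment (fst R) 1 = moment (fst P) 1 * moment (fst Q) 1"
proof -
  note E = cm_convD[OF assms]
  let ?mR = "moment (fst R) 1" and ?mQ = "moment (fst Q) 1" and ?mP = "moment (fst P) 1"
  have "?mR - ?mP * ?mQ = 0"
  proof (rule monomial_coefficient_eq_0[of "1/16" _ 1 72])
    fix t :: real
    assume t: "0 < t" "t < 1/16"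
    define z where "z = complex_of_real t"
    define w where "w = eta_fun (snd P) z"
    have z: "cmod z = t" "cmod z \<le> 1/4" "cmod z < 1"
      using t by (auto simp: z_def)
    have w: "cmod w \<le> 4 * t" "cmod w \<le> 1/4"
      using norm_eta_fun_le[OF E(4) z(2)] z t by (auto simp: w_def)
    have "(?mR - ?mP * ?mQ) * z
        = (?mR * z - eta_fun (fst R) z) + (eta_fun (fst P) z - ?mP * z) * h_fun (fst Q) w
          + ?mP * z * (h_fun (fst Q) w - ?mQ)"
      using E(8)[OF z(3)] by (simp add: w_def algebra_simps)
    also have "cmod \<dots> \<le> 8 * t ^ 2 + (8 * t ^ 2) * 4 + 1 * t * (8 * (4 * t))"
    proof (intro norm_triangle_mono)
      show "cmod (?mR * z - eta_fun (fst R) z) \<le> 8 * t ^ 2"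
        using eta_fun_first_order_expansion[OF E(5) z(2)] z by (simp add: norm_minus_commute)
      show "cmod ((eta_fun (fst P) z - ?mP * z) * h_fun (fst Q) w) \<le> (8 * t ^ 2) * 4"
        unfolding norm_mult using eta_fun_first_order_expansion[OF E(3) z(2)] norm_h_fun_le[OF E(1) w(2)] z
        by (intro mult_mono) auto
      show "cmod (?mP * z * (h_fun (fst Q) w - ?mQ)) \<le> 1 * t * (8 * (4 * t))"
        unfolding norm_mult using norm_moment_le_1[OF E(3)] norm_h_fun_minus_moment_le[OF E(1) w(2)] w z
        by (intro mult_mono) auto
    qed
    finally show "cmod (?mR - ?mP * ?mQ) * t ^ 1 \<le> 72 * t ^ (1 + 1)"
      using t by (simp add: z_def norm_mult power2_eq_square)
  qed simp
  then show ?thesis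
    by simp
qed

lemma cm_pow_ge_1: "cm_pow P k Q \<Longrightarrow> k \<ge> 1"
  by (induction rule: cm_pow.induct) auto

lemma cm_pow_moment_1:
  assumes "cm_pow P k Q"
  shows "moment (fst Q) 1 = moment (fst P) 1 ^ k \<and> moment (snd Q) 1 = moment (snd P) 1 ^ k"
  using assms
proof (induction rule: cm_pow.induct)
  case (step k Q R)
  then show ?case
    using moment_1_cm_conv_fst[OF step.hyps(2)] moment_1_cm_conv_snd[OF step.hyps(2)]
    by (simp add: mult.commute)
qed simp

lemma vanishes_to_order_eta_snd_cm_pow:
  assumes "cm_pow P k Q" "moment (snd P) 1 = 0"
  shows "vanishes_to_order (eta_fun (snd Q)) (k + 1)"
  using assms
proof (induction rule: cm_pow.induct)
  case one
  then show ?case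
    using vanishes_to_order_eta_fun_2[of "snd P"] by (simp add: numeral_2_eq_2)
next
  case (step k Q R)
  note E = cm_convD[OF step.hyps(2)]
  have "vanishes_to_order (\<lambda>z. eta_fun (snd Q) (eta_fun (snd P) z)) (2 * (k + 1))"
    using step vanishes_to_order_eta_fun_2[OF E(4)] by (intro vanishes_to_order_compose) auto
  then have "vanishes_to_order (eta_fun (snd R)) (2 * (k + 1))"
    using E(7) by (rule vanishes_to_order_cong[rotated])
  then show ?case
    by (rule vanishes_to_order_mono) simp
qed

lemma vanishes_to_order_eta_fst_cm_pow:
  assumes "cm_pow P k Q" "moment (fst P) 1 = 0"
  shows "vanishes_to_order (eta_fun (fst Q)) (k + 1)"
  using assms
proof (induction rule: cm_pow.induct)
  case one
  then show ?case
    using vanishes_to_order_eta_fun_2[of "fst P"] by (simp add: numeral_2_eq_2)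
next
  case (step k Q R)
  note E = cm_convD[OF step.hyps(2)]
  have "moment (fst Q) 1 = 0"
    using cm_pow_moment_1[OF step.hyps(1)] cm_pow_ge_1[OF step.hyps(1)] step.prems by simp
  then have "vanishes_to_order (h_fun (fst Q)) k"
    using E(1) step.IH step.prems by (intro vanishes_to_order_h_fun)
  then have "vanishes_to_order (\<lambda>z. h_fun (fst Q) (eta_fun (snd P) z)) (1 * k)"
    using vanishes_to_order_eta_fun_1[OF E(4)] by (rule vanishes_to_order_compose) simp
  then have "vanishes_to_order (\<lambda>z. eta_fun (fst P) z * h_fun (fst Q) (eta_fun (snd P) z)) (2 + 1 * k)"
    using vanishes_to_order_eta_fun_2[OF E(3) step.prems] by (intro vanishes_to_order_mult)
  then have "vanishes_to_order (eta_fun (fst R)) (2 + 1 * k)"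
    using E(8) by (rule vanishes_to_order_cong[rotated])
  then show ?case
    by simp
qed

section \<open>Haar measure\<close>

lemma haar_circle_map_measurable: "(\<lambda>t::real. cis (2 * pi * t)) \<in> borel_measurable borel"
  by (intro borel_measurable_continuous_onI continuous_intros)

lemma circle_prob_haar_circle: "circle_prob haar_circle"
proof -
  let ?U = "uniform_measure lborel {0..(1::real)}" and ?e = "\<lambda>t::real. cis (2 * pi * t)"
  have U: "prob_space ?U"
    by (rule prob_space_uniform_measure) auto
  have e: "?e \<in> measurable ?U borel"
    using haar_circle_map_measurable by simp
  have "emeasure haar_circle (sphere 0 1) = emeasure ?U (?e -` sphere 0 1 \<inter> space ?U)"
    unfolding haar_circle_def by (rule emeasure_distr[OF e]) simp
  also have "?e -` sphere 0 1 \<inter> space ?U = space ?U"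
    by auto
  finally show ?thesis
    unfolding circle_prob_def using prob_space.emeasure_space_1[OF U]
    by (simp add: haar_circle_def prob_space.prob_space_distr[OF U e])
qed

lemma moment_haar_circle:
  assumes k: "k \<ge> 1"
  shows "moment haar_circle k = 0"
proof -
  define F where "F t = exp (\<i> * (2 * pi * real k) * complex_of_real t) / (\<i> * (2 * pi * real k))"
    for t
  have "moment haar_circle k = integral\<^sup>L (uniform_measure lborel {0..(1::real)}) (\<lambda>t. cis (2 * pi * t) ^ k)"
    unfolding moment_def haar_circle_def
    by (rule integral_distr) (use haar_circle_map_measurable in auto)
  also have "\<dots> = integral\<^sup>L lborel (\<lambda>t. indicator {0..1} t *\<^sub>R cis (2 * pi * t) ^ k)"
  proof -
    have "uniform_measure lborel {0..(1::real)} = density lborel (\<lambda>x. ennreal (indicator {0..1} x))"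
      unfolding uniform_measure_def
      by (intro arg_cong[where f="density lborel"] ext) (auto simp: indicator_def)
    then show ?thesis
      by (simp add: integral_density borel_measurable_continuous_onI continuous_intros)
  qed
  also have "\<dots> = integral\<^sup>L lborel (\<lambda>t. indicator {0..1} t *\<^sub>R cis (2 * pi * real k * t))"
    by (simp only: Complex.DeMoivre) (simp add: mult_ac)
  also have "\<dots> = F 1 - F 0"
  proof (rule integral_FTC_atLeastAtMost)
    fix x :: real
    have "((\<lambda>z. exp (\<i> * (2 * pi * real k) * z) / (\<i> * (2 * pi * real k)))
          has_field_derivative cis (2 * pi * real k * x)) (at (complex_of_real x))"
      using k by (auto intro!: derivative_eq_intros simp: cis_conv_exp mult_ac)
    then show "(F has_vector_derivative cis (2 * pi * real k * x)) (at x within {0..1})"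
      unfolding F_def by (rule has_vector_derivative_real_field)
  qed (auto simp: F_def intro!: continuous_intros)
  also have "\<dots> = 0"
    using exp_integer_2pi[of "of_nat k"] by (simp add: F_def mult_ac)
  finally show ?thesis .
qed

section \<open>A measure on the circle is determined by its moments\<close>

lemma integral_power_mult_cnj_power:
  assumes M: "circle_prob M"
  shows "integral\<^sup>L M (\<lambda>z. z ^ j * cnj z ^ k)
    = (if k \<le> j then moment M (j - k) else cnj (moment M (k - j)))"
proof -
  have "AE z in M. z ^ j * cnj z ^ k = (if k \<le> j then z ^ (j - k) else cnj (z ^ (k - j)))"
    using circle_prob_AE_norm_eq_1[OF M]
  proof eventually_elim
    case (elim z)
    then have unit: "z * cnj z = 1"
      by (simp add: complex_mult_cnj cmod_def power2_eq_square)
    show ?case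
    proof (cases "k \<le> j")
      case True
      then have "z ^ j * cnj z ^ k = z ^ (j - k) * (z * cnj z) ^ k"
        by (simp add: power_mult_distrib mult.assoc flip: power_add)
      then show ?thesis
        using True unit by simp
    next
      case False
      then have "z ^ j * cnj z ^ k = cnj z ^ (k - j) * (z * cnj z) ^ j"
        by (simp add: power_mult_distrib mult_ac flip: power_add)
      then show ?thesis
        using False unit by (simp add: complex_cnj_power)
    qed
  qed
  then have "integral\<^sup>L M (\<lambda>z. z ^ j * cnj z ^ k)
      = integral\<^sup>L M (\<lambda>z. if k \<le> j then z ^ (j - k) else cnj (z ^ (k - j)))"
    by (intro integral_cong_AE circle_prob_measurable[OF M])
       (cases "k \<le> j"; auto intro!: borel_measurable_continuous_onI continuous_intros)+
  also have "\<dots> = (if k \<le> j then moment M (j - k) else cnj (moment M (k - j)))"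
    by (simp add: moment_def Bochner_Integration.integral_cnj del: complex_cnj_power)
  finally show ?thesis .
qed

inductive_set conj_poly :: "(complex \<Rightarrow> complex) set" where
  monomial: "(\<lambda>z. c * z ^ j * cnj z ^ k) \<in> conj_poly"
| add: "f \<in> conj_poly \<Longrightarrow> g \<in> conj_poly \<Longrightarrow> (\<lambda>z. f z + g z) \<in> conj_poly"

lemma continuous_on_conj_poly: "f \<in> conj_poly \<Longrightarrow> continuous_on UNIV f"
  by (induction rule: conj_poly.induct) (auto intro!: continuous_intros)

lemma conj_poly_mult_monomial:
  "g \<in> conj_poly \<Longrightarrow> (\<lambda>z. c * z ^ j * cnj z ^ k * g z) \<in> conj_poly"
proof (induction rule: conj_poly.induct)
  case (monomial c' j' k')
  then show ?case
    using conj_poly.monomial[of "c * c'" "j + j'" "k + k'"] by (simp add: power_add mult_ac)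
next
  case (add f g)
  then show ?case
    using conj_poly.add[OF add.IH] by (simp add: distrib_left)
qed

lemma conj_poly_mult: "f \<in> conj_poly \<Longrightarrow> g \<in> conj_poly \<Longrightarrow> (\<lambda>z. f z * g z) \<in> conj_poly"
proof (induction rule: conj_poly.induct)
  case (monomial c j k)
  then show ?case
    by (rule conj_poly_mult_monomial)
next
  case (add f1 f2)
  then show ?case
    using conj_poly.add[OF add.IH] by (simp add: distrib_right)
qed

lemma real_polynomial_function_conj_poly:
  fixes g :: "complex \<Rightarrow> real"
  assumes "real_polynomial_function g"
  shows "(\<lambda>z. complex_of_real (g z)) \<in> conj_poly"
  using assms
proof (induction rule: real_polynomial_function.induct)
  case (linear g)
  let ?a = "(g 1 - \<i> * g \<i>) / 2" and ?b = "(g 1 + \<i> * g \<i>) / 2"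
  have "complex_of_real (g z) = ?a * z ^ 1 * cnj z ^ 0 + ?b * z ^ 0 * cnj z ^ 1" for z
  proof -
    have "z = Re z *\<^sub>R 1 + Im z *\<^sub>R \<i>"
      by (simp add: complex_eq_iff)
    then have "g z = g (Re z *\<^sub>R 1 + Im z *\<^sub>R \<i>)"
      by (rule arg_cong)
    then have "g z = Re z * g 1 + Im z * g \<i>"
      using bounded_linear.linear[OF linear.hyps] by (simp add: linear_add linear_scale)
    then show ?thesis
      by (simp add: complex_eq_iff algebra_simps flip: add_divide_distrib)
  qed
  then have "(\<lambda>z. complex_of_real (g z)) = (\<lambda>z. ?a * z ^ 1 * cnj z ^ 0 + ?b * z ^ 0 * cnj z ^ 1)"
    by (rule ext)
  also have "\<dots> \<in> conj_poly"
    by (intro conj_poly.add conj_poly.monomial)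
  finally show ?case .
next
  case (const c)
  then show ?case
    using conj_poly.monomial[of "complex_of_real c" 0 0] by simp
next
  case (add f g)
  then show ?case
    using conj_poly.add by fastforce
next
  case (mult f g)
  then show ?case
    using conj_poly_mult by fastforce
qed

lemma integral_conj_poly_eq:
  assumes M: "circle_prob M" and N: "circle_prob N" and moments: "moment M = moment N"
    and f: "f \<in> conj_poly"
  shows "integral\<^sup>L M f = integral\<^sup>L N f"
  using f
proof (induction rule: conj_poly.induct)
  case (monomial c j k)
  then show ?case
    using integral_power_mult_cnj_power[OF M, of j k] integral_power_mult_cnj_power[OF N, of j k]
    by (simp add: moments mult.assoc)
next
  case (add f g)
  have "integrable L f" "integrable L g" if "circle_prob L" for L
    using that add.hyps by (auto intro: circle_prob_integrable_continuous continuous_on_conj_poly)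
  then show ?case
    using add.IH M N by simp
qed

lemma integral_continuous_eq_if_moments_eq:
  fixes f :: "complex \<Rightarrow> real"
  assumes M: "circle_prob M" and N: "circle_prob N" and moments: "moment M = moment N"
    and f: "continuous_on UNIV f"
  shows "integral\<^sup>L M f = integral\<^sup>L N f"
proof (rule antisym; rule field_le_epsilon)
  have approx: "\<bar>integral\<^sup>L L f - integral\<^sup>L L g\<bar> \<le> e"
    if L: "circle_prob L" and g: "continuous_on UNIV g" and e: "\<forall>z\<in>sphere 0 1. \<bar>f z - g z\<bar> < e"
    for L g e
  proof -
    have "integral\<^sup>L L f - integral\<^sup>L L g = integral\<^sup>L L (\<lambda>z. f z - g z)"
      using circle_prob_integrable_continuous[OF L f] circle_prob_integrable_continuous[OF L g] by simp
    also have "norm \<dots> \<le> e"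
    proof (rule circle_prob_norm_integral_le[OF L])
      show "integrable L (\<lambda>z. f z - g z)"
        using f g by (intro circle_prob_integrable_continuous[OF L] continuous_intros)
      show "AE z in L. norm (f z - g z) \<le> e"
        using circle_prob_AE_norm_eq_1[OF L]
      proof eventually_elim
        case (elim z)
        then show ?case
          using e by (simp add: less_imp_le)
      qed
    qed
    finally show ?thesis
      by simp
  qed
  have close: "\<bar>integral\<^sup>L M f - integral\<^sup>L N f\<bar> \<le> 2 * e" if "0 < e" for e
  proof -
    have "continuous_on (sphere 0 1) f"
      using f by (rule continuous_on_subset) simp
    then obtain g where g: "real_polynomial_function g" "\<And>z. z \<in> sphere 0 1 \<Longrightarrow> \<bar>f z - g z\<bar> < e"
      using Stone_Weierstrass_real_polynomial_function[OF compact_sphere _ \<open>0 < e\<close>] by blast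
    have g_cont: "continuous_on UNIV g"
      using g(1) by (simp add: continuous_on_polymonial_function real_polynomial_function_eq)
    have "complex_of_real (integral\<^sup>L M g) = complex_of_real (integral\<^sup>L N g)"
      using integral_conj_poly_eq[OF M N moments real_polynomial_function_conj_poly[OF g(1)]] by simp
    then have "integral\<^sup>L M g = integral\<^sup>L N g"
      by simp
    moreover have "\<forall>z\<in>sphere 0 1. \<bar>f z - g z\<bar> < e"
      using g(2) by blast
    ultimately show ?thesis
      using approx[OF M g_cont] approx[OF N g_cont] by fastforce
  qed
  show "integral\<^sup>L M f \<le> integral\<^sup>L N f + e" if "0 < e" for e
    using close[of "e / 2"] that by simp
  show "integral\<^sup>L N f \<le> integral\<^sup>L M f + e" if "0 < e" for e
    using close[of "e / 2"] that by simp
qed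

lemma integral_tendsto_measure_closed:
  assumes M: "circle_prob M" and C: "closed C" "C \<noteq> {}"
  shows "(\<lambda>n. integral\<^sup>L M (\<lambda>x. max 0 (1 - real n * infdist x C))) \<longlonglongrightarrow> measure M C"
proof -
  interpret prob_space M
    using M by (rule circle_prob_prob_space)
  have "(\<lambda>n. integral\<^sup>L M (\<lambda>x. max 0 (1 - real n * infdist x C))) \<longlonglongrightarrow> integral\<^sup>L M (indicator C)"
  proof (rule integral_dominated_convergence[where w="\<lambda>_. 1"])
    show "indicator C \<in> borel_measurable M"
      using C(1) by (intro borel_measurable_indicator) (simp add: circle_prob_sets[OF M] borel_closed)
    show "(\<lambda>x. max 0 (1 - real n * infdist x C)) \<in> borel_measurable M" for n
      by (rule circle_prob_measurable[OF M], intro borel_measurable_continuous_onI continuous_intros)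
    show "AE x in M. norm (max 0 (1 - real n * infdist x C)) \<le> 1" for n
      using infdist_nonneg[of _ C] by (auto intro!: AE_I2)
    show "AE x in M. (\<lambda>n. max 0 (1 - real n * infdist x C)) \<longlonglongrightarrow> indicator C x"
    proof (rule AE_I2)
      fix x
      show "(\<lambda>n. max 0 (1 - real n * infdist x C)) \<longlonglongrightarrow> indicator C x"
      proof (cases "x \<in> C")
        case False
        then have "0 < infdist x C"
          using in_closed_iff_infdist_zero[OF C] infdist_nonneg[of x C] by auto
        then have "filterlim (\<lambda>n. infdist x C * real n) at_top sequentially"
          by (intro filterlim_tendsto_pos_mult_at_top[OF tendsto_const] filterlim_real_sequentially)
        then have "\<forall>\<^sub>F n in sequentially. 1 < infdist x C * real n"
          unfolding filterlim_at_top_dense by blast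
        then have "\<forall>\<^sub>F n in sequentially. max 0 (1 - real n * infdist x C) = 0"
          by eventually_elim (simp add: mult.commute)
        then show ?thesis
          using False by (simp add: tendsto_eventually)
      qed simp
    qed
  qed simp
  then show ?thesis
    using circle_prob_space[OF M] by simp
qed

lemma circle_prob_eqI_moments:
  assumes M: "circle_prob M" and N: "circle_prob N" and moments: "moment M = moment N"
  shows "M = N"
proof (rule measure_eqI_generator_eq[where E="Collect closed" and \<Omega>=UNIV and A="\<lambda>_. UNIV"])
  have borel: "sets (borel :: complex measure) = sigma_sets UNIV (Collect closed)"
    unfolding borel_eq_closed by (rule sets_measure_of) simp
  show "sets M = sigma_sets UNIV (Collect closed)" "sets N = sigma_sets UNIV (Collect closed)"
    using circle_prob_sets[OF M] circle_prob_sets[OF N] borel by simp_all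
  show "emeasure M C = emeasure N C" if "C \<in> Collect closed" for C
  proof (cases "C = {}")
    case False
    have "closed C"
      using that by simp
    have "integral\<^sup>L M (\<lambda>x. max 0 (1 - real n * infdist x C))
        = integral\<^sup>L N (\<lambda>x. max 0 (1 - real n * infdist x C))" for n
      using M N moments by (intro integral_continuous_eq_if_moments_eq continuous_intros)
    then have "(\<lambda>n. integral\<^sup>L N (\<lambda>x. max 0 (1 - real n * infdist x C))) \<longlonglongrightarrow> measure M C"
      using integral_tendsto_measure_closed[OF M \<open>closed C\<close> False] by simp
    then have "measure M C = measure N C"
      using integral_tendsto_measure_closed[OF N \<open>closed C\<close> False] by (rule LIMSEQ_unique)
    then show ?thesis
      using M N by (simp add: circle_prob_prob_space prob_space.finite_measure finite_measure.emeasure_eq_measure)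
  qed simp
  show "emeasure M UNIV \<noteq> \<infinity>"
    using M by (simp add: circle_prob_prob_space prob_space.finite_measure finite_measure.emeasure_finite)
qed (auto simp: Int_stable_def)

lemma circle_prob_eq_haar_circle:
  assumes M: "circle_prob M" and moments: "\<And>k. k \<ge> 1 \<Longrightarrow> moment M k = 0"
  shows "M = haar_circle"
proof (rule circle_prob_eqI_moments[OF M circle_prob_haar_circle], rule ext)
  fix k
  have "moment L 0 = 1" if "circle_prob L" for L
    using that by (simp add: moment_def circle_prob_prob_space prob_space.prob_space)
  then show "moment M k = moment haar_circle k"
    using M circle_prob_haar_circle moments moment_haar_circle by (cases "k = 0") simp_all
qed

section \<open>Infinitely divisible pairs\<close>

lemma cm_inf_div_vanishes_to_order_eta:
  assumes "cm_inf_div \<mu> \<nu>"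
  shows "moment \<mu> 1 = 0 \<Longrightarrow> vanishes_to_order (eta_fun \<mu>) N"
    and "moment \<nu> 1 = 0 \<Longrightarrow> vanishes_to_order (eta_fun \<nu>) N"
proof -
  have "\<exists>P. circle_prob (fst P) \<and> circle_prob (snd P) \<and> cm_pow P (N + 2) (\<mu>, \<nu>)"
    using assms unfolding cm_inf_div_def by simp
  then obtain P where P: "cm_pow P (N + 2) (\<mu>, \<nu>)"
    by blast
  have moments: "moment \<mu> 1 = moment (fst P) 1 ^ (N + 2)" "moment \<nu> 1 = moment (snd P) 1 ^ (N + 2)"
    using cm_pow_moment_1[OF P] by simp_all
  show "vanishes_to_order (eta_fun \<mu>) N" if "moment \<mu> 1 = 0"
  proof -
    have "moment (fst P) 1 ^ (N + 2) = 0"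
      using that moments(1) by simp
    then have "moment (fst P) 1 = 0"
      by (rule power_eq_0_iff[THEN iffD1, THEN conjunct1])
    then have "vanishes_to_order (eta_fun (fst (\<mu>, \<nu>))) (N + 2 + 1)"
      by (rule vanishes_to_order_eta_fst_cm_pow[OF P])
    then show ?thesis
      by (simp add: vanishes_to_order_mono)
  qed
  show "vanishes_to_order (eta_fun \<nu>) N" if "moment \<nu> 1 = 0"
  proof -
    have "moment (snd P) 1 ^ (N + 2) = 0"
      using that moments(2) by simp
    then have "moment (snd P) 1 = 0"
      by (rule power_eq_0_iff[THEN iffD1, THEN conjunct1])
    then have "vanishes_to_order (eta_fun (snd (\<mu>, \<nu>))) (N + 2 + 1)"
      by (rule vanishes_to_order_eta_snd_cm_pow[OF P])
    then show ?thesis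
      by (simp add: vanishes_to_order_mono)
  qed
qed

lemma circle_prob_eq_haar_circle_if_eta_vanishes:
  assumes M: "circle_prob M" and vanishes: "\<And>N. vanishes_to_order (eta_fun M) N"
  shows "M = haar_circle"
proof (rule circle_prob_eq_haar_circle[OF M])
  show "moment M k = 0" if "k \<ge> 1" for k
    using vanishes_to_order_psi_fun[OF M vanishes] that
    by (rule moment_eq_0_if_vanishes_to_all_orders[OF M])
qed

theorem lemma5p2:
  fixes \<mu> \<nu> :: "complex measure"
  assumes "cm_inf_div \<mu> \<nu>"
  shows "(integral\<^sup>L \<mu> (\<lambda>\<zeta>. \<zeta>) = 0 \<longrightarrow> \<mu> = haar_circle)
       \<and> (integral\<^sup>L \<nu> (\<lambda>\<zeta>. \<zeta>) = 0 \<longrightarrow> \<nu> = haar_circle)"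
proof (intro conjI impI)
  have \<mu>: "circle_prob \<mu>" and \<nu>: "circle_prob \<nu>"
    using assms by (simp_all add: cm_inf_div_def)
  show "\<mu> = haar_circle" if "integral\<^sup>L \<mu> (\<lambda>\<zeta>. \<zeta>) = 0"
    using that cm_inf_div_vanishes_to_order_eta(1)[OF assms]
    by (intro circle_prob_eq_haar_circle_if_eta_vanishes[OF \<mu>]) (simp add: moment_def)
  show "\<nu> = haar_circle" if "integral\<^sup>L \<nu> (\<lambda>\<zeta>. \<zeta>) = 0"
    using that cm_inf_div_vanishes_to_order_eta(2)[OF assms]
    by (intro circle_prob_eq_haar_circle_if_eta_vanishes[OF \<nu>]) (simp add: moment_def)
qed

end
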